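(* Let $p>1$ and $x\in(0,1)$. Then $$\arcsin_p\left(\frac{x}{\sqrt[p]{1+x^p}}\right)=\arctan_p(x),\qquad \arcsin_p(x)=\arctan_p\left(\frac{x}{\sqrt[p]{1-x^p}}\right),$$ $$\arccos_p(x)=\arctan_p\left(\frac{\sqrt[p]{1-x^p}}{x}\right),\qquad \arccos_p\left(\frac{1}{\sqrt[p]{1+x^p}}\right)=\arctan_p(x).$$
   Context: For $p>1$: $\arcsin_p y=\int_0^y(1-t^p)^{-1/p}dt$ for $y\in(0,1)$; $\arccos_p y=\arcsin_p\bigl((1-y^p)^{1/p}\bigr)$ for $y\in(0,1)$; $\arctan_p y=\int_0^y(1+t^p)^{-1}dt$ for $y\ge0$. *)

theory Defs
  imports "HOL-Analysis.Analysis"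
begin

definition arcsin_p :: "real \<Rightarrow> real \<Rightarrow> real" where
  "arcsin_p p y = integral {0..y} (\<lambda>t. (1 - t powr p) powr (- 1 / p))"

definition arccos_p :: "real \<Rightarrow> real \<Rightarrow> real" where
  "arccos_p p y = arcsin_p p ((1 - y powr p) powr (1 / p))"

definition arctan_p :: "real \<Rightarrow> real \<Rightarrow> real" where
  "arctan_p p y = integral {0..y} (\<lambda>t. 1 / (1 + t powr p))"

end

theory Submission
  imports Defs
begin

text \<open>
  Put s(t) = t / (1 + t^p)^(1/p), the p-analogue of sin expressed through tan. Then
  s'(t) = (1 + t^p)^(-1/p - 1) and 1 - s(t)^p = 1 / (1 + t^p), so the substitution u = s(t) in
  the integral defining arcsin_p (s y) turns its integrand into 1 / (1 + t^p); this gives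
  arcsin_p (s y) = arctan_p y. The other three identities follow by inverting s and because
  y \<mapsto> (1 - y^p)^(1/p) is an involution of [0,1] carrying 1 / (1 + x^p)^(1/p) to s(x).
\<close>

definition sin_of_tan_p :: "real \<Rightarrow> real \<Rightarrow> real" where
  "sin_of_tan_p p t = t / (1 + t powr p) powr (1 / p)"

definition p_complement :: "real \<Rightarrow> real \<Rightarrow> real" where
  "p_complement p y = (1 - y powr p) powr (1 / p)"

lemma arccos_p_eq_arcsin_p_complement: "arccos_p p y = arcsin_p p (p_complement p y)"
  by (simp add: arccos_p_def p_complement_def)

lemma p_complement_involutive:
  fixes p y :: real
  assumes "p > 0" and "0 \<le> y" and "y \<le> 1"
  shows "p_complement p (p_complement p y) = y"
proof -
  have "y powr p \<le> 1"
    using assms powr_mono2[of p y 1] by simp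
  then show ?thesis
    using assms by (simp add: p_complement_def powr_powr)
qed

lemma p_complement_bounds:
  fixes p y :: real
  assumes "p > 0" and "0 < y" and "y < 1"
  shows "0 < p_complement p y" and "p_complement p y < 1"
proof -
  have "0 < y powr p" and "y powr p < 1"
    using assms powr_less_mono2[of p y 1] by auto
  then show "0 < p_complement p y" and "p_complement p y < 1"
    using assms powr_less_mono2[of "1/p" "1 - y powr p" 1] by (auto simp: p_complement_def)
qed

lemma one_minus_powr_sin_of_tan_p:
  fixes p t :: real
  assumes "p > 0" and "t \<ge> 0"
  shows "1 - sin_of_tan_p p t powr p = 1 / (1 + t powr p)"
proof -
  have "0 < 1 + t powr p"
    by (simp add: add_pos_nonneg)
  moreover have "sin_of_tan_p p t powr p = t powr p / (1 + t powr p)"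
    using assms by (simp add: sin_of_tan_p_def powr_divide powr_powr add_nonneg_nonneg)
  ultimately show ?thesis
    by (simp add: field_simps)
qed

lemma sin_of_tan_p_bounds:
  fixes p t :: real
  assumes "p > 0" and "t \<ge> 0"
  shows "0 \<le> sin_of_tan_p p t" and "sin_of_tan_p p t < 1"
proof -
  have "t = (t powr p) powr (1/p)"
    using assms by (simp add: powr_powr)
  also have "\<dots> < (1 + t powr p) powr (1/p)"
    using assms by (intro powr_less_mono2) auto
  finally have "t < (1 + t powr p) powr (1/p)" .
  with assms(2) show "sin_of_tan_p p t < 1"
    by (simp add: sin_of_tan_p_def divide_less_eq_1)
  show "0 \<le> sin_of_tan_p p t"
    using assms by (simp add: sin_of_tan_p_def)
qed

lemma continuous_on_sin_of_tan_p:
  fixes p :: real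
  assumes "p > 0" and "S \<subseteq> {0..}"
  shows "continuous_on S (sin_of_tan_p p)"
proof -
  have "continuous_on S (\<lambda>t. t powr p)"
    using assms by (intro continuous_on_powr') (auto intro: continuous_intros)
  moreover have "\<And>t. 1 + t powr p \<noteq> 0"
    by (metis add_pos_nonneg powr_ge_zero zero_less_one order_less_irrefl)
  ultimately show ?thesis
    unfolding sin_of_tan_p_def by (auto intro!: continuous_intros)
qed

lemma has_real_derivative_sin_of_tan_p:
  fixes p t :: real
  assumes p: "p > 0" and t: "t > 0"
  shows "(sin_of_tan_p p has_real_derivative (1 + t powr p) powr (-1/p - 1)) (at t)"
proof -
  define A where "A = 1 + t powr p"
  have A: "A > 0"
    by (simp add: A_def add_pos_nonneg)
  have "((\<lambda>t. 1 + t powr p) has_real_derivative p * t powr (p-1)) (at t)"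
    using t by (auto intro!: derivative_eq_intros)
  from DERIV_mult[OF DERIV_ident DERIV_fun_powr[OF this, of "-1/p"]]
  have "((\<lambda>t. t * (1 + t powr p) powr (-1/p)) has_real_derivative
          A powr (-1/p) - A powr (-1/p - 1) * (t * t powr (p-1))) (at t)"
    using p A by (simp add: A_def algebra_simps)
  moreover have "t * t powr (p - 1) = A - 1"
    using t by (simp add: A_def powr_diff)
  moreover have "A powr (-1/p) = A powr (-1/p - 1) * A"
    using A by (simp add: powr_diff)
  moreover have "sin_of_tan_p p = (\<lambda>t. t * (1 + t powr p) powr (-1/p))"
    by (auto simp: sin_of_tan_p_def powr_minus divide_inverse)
  ultimately show ?thesis
    by (simp add: A_def algebra_simps)
qed

lemma sin_of_tan_p_mono:
  fixes p a b :: real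
  assumes "p > 0" and "0 \<le> a" and "a \<le> b"
  shows "sin_of_tan_p p a \<le> sin_of_tan_p p b"
  using assms(3)
proof (rule DERIV_nonneg_imp_increasing_open)
  show "continuous_on {a..b} (sin_of_tan_p p)"
    using assms by (intro continuous_on_sin_of_tan_p) auto
next
  fix x assume "a < x" "x < b"
  then show "\<exists>y. DERIV (sin_of_tan_p p) x :> y \<and> y \<ge> 0"
    using assms has_real_derivative_sin_of_tan_p[of p x] by (intro exI[of _ "(1 + x powr p) powr (-1/p - 1)"]) auto
qed

lemma arcsin_p_sin_of_tan_p:
  fixes p y :: real
  assumes p: "p > 0" and y: "y \<ge> 0"
  shows "arcsin_p p (sin_of_tan_p p y) = arctan_p p y"
proof -
  let ?s = "sin_of_tan_p p"
  let ?f = "\<lambda>u::real. (1 - u powr p) powr (-1/p)"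
  let ?s' = "\<lambda>t::real. (1 + t powr p) powr (-1/p - 1)"
  have s0: "?s 0 = 0"
    by (simp add: sin_of_tan_p_def)
  have "continuous_on {0..?s y} ?f"
  proof (rule continuous_on_powr[OF continuous_on_diff[OF continuous_on_const] continuous_on_const])
    show "continuous_on {0..?s y} (\<lambda>u. u powr p)"
      using p by (intro continuous_on_powr') (auto intro: continuous_intros)
  next
    show "\<forall>u\<in>{0..?s y}. 1 - u powr p \<noteq> 0"
    proof
      fix u assume "u \<in> {0..?s y}"
      then have "0 \<le> u" and "u < 1"
        using sin_of_tan_p_bounds(2)[OF p y] by auto
      then show "1 - u powr p \<noteq> 0"
        using p powr_less_mono2[of p u 1] by simp
    qed
  qed
  moreover have "?s ` {0..y} \<subseteq> {0..?s y}"
  proof (rule image_subsetI)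
    fix t assume "t \<in> {0..y}"
    then show "?s t \<in> {0..?s y}"
      using sin_of_tan_p_mono[OF p, of 0 t] sin_of_tan_p_mono[OF p, of t y] s0 by auto
  qed
  moreover have "(?s has_field_derivative ?s' t) (at t within {0..y})" if "t \<in> {0..y} - {0}" for t
    using that has_real_derivative_sin_of_tan_p[OF p, of t] by (auto intro: has_field_derivative_at_within)
  ultimately have "((\<lambda>t. ?s' t *\<^sub>R ?f (?s t)) has_integral integral {0..?s y} ?f) {0..y}"
    using has_integral_substitution_strong[of "{0}" 0 y ?s 0 "?s y" ?f ?s'] y
      sin_of_tan_p_mono[OF p order_refl y] continuous_on_sin_of_tan_p[OF p, of "{0..y}"]
    by (simp add: s0)
  moreover have "?s' t *\<^sub>R ?f (?s t) = 1 / (1 + t powr p)" if "t \<in> {0..y}" for t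
  proof -
    have A: "0 < 1 + t powr p"
      by (simp add: add_pos_nonneg)
    have "?f (?s t) = (1 + t powr p) powr (1/p)"
      using that p A by (simp add: one_minus_powr_sin_of_tan_p powr_divide powr_minus_divide)
    then show ?thesis
      using A by (simp add: powr_add[symmetric] powr_minus_divide)
  qed
  ultimately show ?thesis
    unfolding arcsin_p_def arctan_p_def
    by (metis (no_types, lifting) has_integral_cong integral_unique)
qed

lemma sin_of_tan_p_inverse:
  fixes p x :: real
  assumes "p > 0" and "0 \<le> x" and "x < 1"
  shows "sin_of_tan_p p (x / p_complement p x) = x"
proof -
  define B where "B = 1 - x powr p"
  have B: "B > 0"
    using assms powr_less_mono2[of p x 1] by (simp add: B_def)
  have "(x / B powr (1/p)) powr p = x powr p / B"
    using assms B by (simp add: powr_divide powr_powr)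
  then have "1 + (x / B powr (1/p)) powr p = 1 / B"
    using B by (simp add: B_def field_simps)
  then show ?thesis
    using B by (simp add: sin_of_tan_p_def p_complement_def B_def[symmetric] powr_divide)
qed

lemma arcsin_p_eq_arctan_p:
  fixes p x :: real
  assumes "p > 0" and "0 \<le> x" and "x < 1"
  shows "arcsin_p p x = arctan_p p (x / p_complement p x)"
  using arcsin_p_sin_of_tan_p[of p "x / p_complement p x"] sin_of_tan_p_inverse[OF assms] assms
  by (simp add: p_complement_def)

lemma p_complement_cos_of_tan_p:
  fixes p x :: real
  assumes "p > 0" and "x \<ge> 0"
  shows "p_complement p (1 / (1 + x powr p) powr (1 / p)) = sin_of_tan_p p x"
proof -
  define A where "A = 1 + x powr p"
  have A: "A > 0"
    by (simp add: A_def add_pos_nonneg)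
  have "1 - (1 / A powr (1/p)) powr p = x powr p / A"
    using assms A by (simp add: powr_divide powr_powr A_def field_simps)
  then show ?thesis
    using assms A by (simp add: p_complement_def sin_of_tan_p_def A_def[symmetric] powr_divide powr_powr)
qed

theorem lemma3p7:
  fixes p x :: real
  assumes "p > 1" and "0 < x" and "x < 1"
  shows "arcsin_p p (x / (1 + x powr p) powr (1 / p)) = arctan_p p x \<and>
    arcsin_p p x = arctan_p p (x / (1 - x powr p) powr (1 / p)) \<and>
    arccos_p p x = arctan_p p ((1 - x powr p) powr (1 / p) / x) \<and>
    arccos_p p (1 / (1 + x powr p) powr (1 / p)) = arctan_p p x"
proof -
  have p: "p > 0"
    using assms(1) by simp
  have sin_tan: "arcsin_p p (sin_of_tan_p p x) = arctan_p p x"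
    using arcsin_p_sin_of_tan_p[OF p] assms by simp
  have "arccos_p p x = arctan_p p (p_complement p x / p_complement p (p_complement p x))"
    using arcsin_p_eq_arctan_p[OF p, of "p_complement p x"] p_complement_bounds[OF p assms(2,3)]
    unfolding arccos_p_eq_arcsin_p_complement by simp
  then have "arccos_p p x = arctan_p p (p_complement p x / x)"
    using p_complement_involutive[OF p] assms by simp
  then show ?thesis
    using sin_tan arcsin_p_eq_arctan_p[OF p] p_complement_cos_of_tan_p[OF p] assms
    by (simp add: sin_of_tan_p_def p_complement_def arccos_p_eq_arcsin_p_complement)
qed

end
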